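(* Let $M\in\Lambda_{\mathrm{NF}}$ have blueprint $\alpha$, and suppose $\alpha\rhd^{b^m_0}_{\omega_m}\cdots\rhd^{b^m_{p_m}}_{\omega_m}\ \cdots\ \rhd^{b^1_0}_{\omega_1}\cdots\rhd^{b^1_{p_1}}_{\omega_1}\emptyset_{\mathbb B}$ (through some intermediate blueprints). Then for every strictly increasing sequence of variables $Y=(y_1,\dots,y_m)$ with $\Omega(Y)=(\omega_1,\dots,\omega_m)$, there exists a term $N$ with the same domain, the same blueprint and the same type as $M$ such that $\mathrm{Free}(N)=Y$ and $\{b : N|_b=y_i\}=\{b^i_0,\dots,b^i_{p_i}\}$ for each $i$.
   Context: Formulas are built from atoms with $\to$. Let $\mathcal X$ be a countably infinite set of variables with an injective map $\mathcal O:\mathcal X\to\mathbb N$; $x<y$ iff $\mathcal O(x)<\mathcal O(y)$. Terms are pure $\lambda$-terms over $\mathcal X$, not identified up to $\alpha$-conversion; no two $\lambda$'s bind the same variable and no variable is both free and bound. $\mathrm{Free}(M)$ is the strictly increasing sequence of free variables of $M$. HRM terms: variables; $\lambda x.M$ with $M$ HRM and $x$ the greatest free variable of $M$; $(MN)$ with $M,N$ HRM and every free variable of $M$ $\le$ some free variable of $N$. Fix $\Omega$ from variables to formulas with each $\Omega^{-1}(\phi)$ infinite; $\Omega(y_1,\dots,y_m)=(\Omega(y_1),\dots,\Omega(y_m))$. Typing: $x:\Omega(x)$; $\lambda x.M:\chi\to\psi$ if $x:\chi$, $M:\psi$, $\lambda x.M$ HRM; $(MN):\psi$ if $M:\chi\to\psi$,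 $N:\chi$, $(MN)$ HRM. $\Lambda_{\mathrm{NF}}$ is the set of typed $\beta$-normal terms. Addresses are finite sequences of positive integers with prefix order $\le$, concatenation $\cdot$, empty address $\varepsilon$. Terms are identified with trees: $x$ is $\varepsilon\mapsto x$; $\lambda x.M$ maps $\varepsilon$ to $\lambda x$ with subtree $M$ at $(1)$; $(M_1M_2)$ maps $\varepsilon$ to $@$ with subtrees $M_1,M_2$ at $(1),(2)$; $M|_a$ is the subterm at $a$, $\mathrm{dom}(M)$ its set of addresses. For a partial tree $\pi$, $\pi|_a$ is $c\mapsto\pi(a\cdot c)$. Let $\mathfrak S$ consist of all formulas (arity 0) and symbols $@_\phi$ (arity 2). A blueprint is a finite partial tree with values in $\mathfrak S$ such that if $\alpha(a)=@_\phi$ then $\alpha|_{a\cdot(1)},\alpha|_{a\cdot(2)}$ are non-empty. Notation: $\emptyset_{\mathbb B}$ empty blueprint; $\phi$ denotes $\varepsilon\mapsto\phi$; $@_\phi(\alpha_1,\alpha_2)$ ($\alpha_i$ non-empty) has root $@_\phi$ and $\alpha_i$ at $(i)$; for pairwise incomparable $\bar a=(a_1,\dots,a_k)$, $*_{\bar a}(\alpha_1,\dots,\alpha_k)$ is the blueprint of minimal domain with restriction $\alpha_i$ at $a_i$; $*(\alpha_1,\dots,\alpha_k)=*_{((1),\dots,(k))}(\dots)$. The stable part of $M\in\Lambda_{\mathrm{NF}}$ is the set of $a\in\mathrm{dom}(M)$ with $\mathrm{Free}(M|_a)\subseteq\mathrm{Free}(M)$ and $M|_a$ a variable or an application. The blueprint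 of $M$ maps each $a$ in the stable part to $\psi$ if $M|_a$ is a variable of type $\psi$, and to $@_\psi$ if $M|_a$ is an application of type $\psi$. Extraction $\alpha\rhd^a_\phi\beta$: (1) $\phi\rhd^\varepsilon_\phi\emptyset_{\mathbb B}$; (2) if $\alpha\rhd^a_\phi\beta$ ($\gamma,\alpha$ non-empty) then $@_\psi(\gamma,\alpha)\rhd^{(2)\cdot a}_\phi*(\gamma,\beta)$; (3) if $\alpha\rhd^a_\phi\beta$, $b\ne\varepsilon$, $(b,c_1,\dots,c_k)$ pairwise incomparable, then $*_{(b,c_1,\dots,c_k)}(\alpha,\gamma_1,\dots,\gamma_k)\rhd^{b\cdot a}_\phi*_{(b,c_1,\dots,c_k)}(\beta,\gamma_1,\dots,\gamma_k)$. *)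

theory Defs
  imports Main "HOL-Library.Sublist"
begin

text \<open>Formulas over an arbitrary type of atoms, built with implication.
  Variables are natural numbers; the order on variables is the order of nat
  (i.e. the injection O into nat is the identity).\<close>

datatype 'a form = Atom 'a | Imp "'a form" "'a form"

type_synonym var = nat

datatype trm = Var var | Lam var trm | App trm trm

fun fvs :: "trm \<Rightarrow> var set" where
  "fvs (Var x) = {x}"
| "fvs (Lam x M) = fvs M - {x}"
| "fvs (App M N) = fvs M \<union> fvs N"

fun bvs :: "trm \<Rightarrow> var list" where
  "bvs (Var x) = []"
| "bvs (Lam x M) = x # bvs M"
| "bvs (App M N) = bvs M @ bvs N"

definition is_term :: "trm \<Rightarrow> bool" where
  "is_term M \<longleftrightarrow> distinct (bvs M) \<and> set (bvs M) \<inter> fvs M = {}"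

definition Free :: "trm \<Rightarrow> var list" where
  "Free M = sorted_list_of_set (fvs M)"

fun hrm :: "trm \<Rightarrow> bool" where
  "hrm (Var x) = True"
| "hrm (Lam x M) = (hrm M \<and> x \<in> fvs M \<and> (\<forall>y\<in>fvs M. y \<le> x))"
| "hrm (App M N) = (hrm M \<and> hrm N \<and> (\<forall>x\<in>fvs M. \<exists>y\<in>fvs N. x \<le> y))"

inductive has_type :: "(var \<Rightarrow> 'a form) \<Rightarrow> trm \<Rightarrow> 'a form \<Rightarrow> bool" for \<Omega> where
  tVar: "has_type \<Omega> (Var x) (\<Omega> x)"
| tLam: "has_type \<Omega> M \<psi> \<Longrightarrow> hrm (Lam x M) \<Longrightarrow> has_type \<Omega> (Lam x M) (Imp (\<Omega> x) \<psi>)"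
| tApp: "has_type \<Omega> M (Imp \<chi> \<psi>) \<Longrightarrow> has_type \<Omega> N \<chi> \<Longrightarrow> hrm (App M N) \<Longrightarrow> has_type \<Omega> (App M N) \<psi>"

fun beta_normal :: "trm \<Rightarrow> bool" where
  "beta_normal (Var x) = True"
| "beta_normal (Lam x M) = beta_normal M"
| "beta_normal (App (Lam x M) N) = False"
| "beta_normal (App M N) = (beta_normal M \<and> beta_normal N)"

definition LambdaNF :: "(var \<Rightarrow> 'a form) \<Rightarrow> trm set" where
  "LambdaNF \<Omega> = {M. is_term M \<and> beta_normal M \<and> (\<exists>\<phi>. has_type \<Omega> M \<phi>)}"

type_synonym addr = "nat list"

definition is_addr :: "addr \<Rightarrow> bool" where
  "is_addr a \<longleftrightarrow> (\<forall>i\<in>set a. 0 < i)"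

fun subt :: "trm \<Rightarrow> addr \<Rightarrow> trm option" where
  "subt M [] = Some M"
| "subt (Lam x M) (i # a) = (if i = 1 then subt M a else None)"
| "subt (App M N) (i # a) = (if i = 1 then subt M a else if i = 2 then subt N a else None)"
| "subt (Var x) (i # a) = None"

definition tdom :: "trm \<Rightarrow> addr set" where
  "tdom M = {a. subt M a \<noteq> None}"

datatype 'a sym = F "'a form" | At "'a form"

type_synonym 'a bp = "addr \<Rightarrow> 'a sym option"

definition bdom :: "'a bp \<Rightarrow> addr set" where
  "bdom \<alpha> = {a. \<alpha> a \<noteq> None}"

definition restr :: "'a bp \<Rightarrow> addr \<Rightarrow> 'a bp" where
  "restr \<alpha> a = (\<lambda>c. \<alpha> (a @ c))"

definition is_blueprint :: "'a bp \<Rightarrow> bool" where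
  "is_blueprint \<alpha> \<longleftrightarrow> finite (bdom \<alpha>) \<and> (\<forall>a\<in>bdom \<alpha>. is_addr a) \<and>
     (\<forall>a \<phi>. \<alpha> a = Some (At \<phi>) \<longrightarrow>
        restr \<alpha> (a @ [1]) \<noteq> Map.empty \<and> restr \<alpha> (a @ [2]) \<noteq> Map.empty)"

definition bleaf :: "'a form \<Rightarrow> 'a bp" where
  "bleaf \<phi> = (\<lambda>c. if c = [] then Some (F \<phi>) else None)"

definition pairwise_incomparable :: "addr list \<Rightarrow> bool" where
  "pairwise_incomparable as \<longleftrightarrow>
     (\<forall>i<length as. \<forall>j<length as. i \<noteq> j \<longrightarrow> \<not> prefix (as ! i) (as ! j))"

text \<open>star [(a1,alpha1),...,(ak,alphak)] is the blueprint of minimal domain whose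
  restriction at ai is alphai (for pairwise incomparable ai).\<close>
fun bstar :: "(addr \<times> 'a bp) list \<Rightarrow> 'a bp" where
  "bstar [] c = None"
| "bstar ((a, \<alpha>) # ps) c = (if prefix a c then \<alpha> (drop (length a) c) else bstar ps c)"

definition bapp :: "'a form \<Rightarrow> 'a bp \<Rightarrow> 'a bp \<Rightarrow> 'a bp" where
  "bapp \<psi> \<alpha>1 \<alpha>2 = (\<lambda>c. if c = [] then Some (At \<psi>) else bstar [([1], \<alpha>1), ([2], \<alpha>2)] c)"

definition blueprint :: "(var \<Rightarrow> 'a form) \<Rightarrow> trm \<Rightarrow> 'a bp" where
  "blueprint \<Omega> M = (\<lambda>a. case subt M a of
       None \<Rightarrow> None
     | Some (Var x) \<Rightarrow> if fvs (Var x) \<subseteq> fvs M then Some (F (\<Omega> x)) else None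
     | Some (Lam x P) \<Rightarrow> None
     | Some (App P Q) \<Rightarrow> if fvs (App P Q) \<subseteq> fvs M
                          then Some (At (THE \<psi>. has_type \<Omega> (App P Q) \<psi>)) else None)"

inductive extr :: "'a bp \<Rightarrow> addr \<Rightarrow> 'a form \<Rightarrow> 'a bp \<Rightarrow> bool" where
  ex_leaf: "extr (bleaf \<phi>) [] \<phi> Map.empty"
| ex_app: "extr \<alpha> a \<phi> \<beta> \<Longrightarrow> is_blueprint \<gamma> \<Longrightarrow> \<gamma> \<noteq> Map.empty \<Longrightarrow> \<alpha> \<noteq> Map.empty \<Longrightarrow>
           extr (bapp \<psi> \<gamma> \<alpha>) (2 # a) \<phi> (bstar [([1], \<gamma>), ([2], \<beta>)])"
| ex_ctx: "extr \<alpha> a \<phi> \<beta> \<Longrightarrow> b \<noteq> [] \<Longrightarrow> is_addr b \<Longrightarrow> \<forall>c\<in>set cs. is_addr c \<Longrightarrow>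
           pairwise_incomparable (b # cs) \<Longrightarrow> length gs = length cs \<Longrightarrow>
           \<forall>g\<in>set gs. is_blueprint g \<Longrightarrow>
           extr (bstar ((b, \<alpha>) # zip cs gs)) (b @ a) \<phi> (bstar ((b, \<beta>) # zip cs gs))"

inductive extr_chain :: "'a bp \<Rightarrow> (addr \<times> 'a form) list \<Rightarrow> 'a bp \<Rightarrow> bool" where
  "extr_chain \<alpha> [] \<alpha>"
| "extr \<alpha> a \<phi> \<beta> \<Longrightarrow> extr_chain \<beta> s \<gamma> \<Longrightarrow> extr_chain \<alpha> ((a, \<phi>) # s) \<gamma>"

definition steps :: "nat \<Rightarrow> (nat \<Rightarrow> 'a form) \<Rightarrow> (nat \<Rightarrow> nat) \<Rightarrow> (nat \<Rightarrow> nat \<Rightarrow> addr)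
                      \<Rightarrow> (addr \<times> 'a form) list" where
  "steps m \<omega> p b = concat (map (\<lambda>i. map (\<lambda>j. (b i j, \<omega> i)) [0..<Suc (p i)]) (rev [1..<Suc m]))"

end

theory Submission
  imports Defs "HOL-Library.Infinite_Set"
begin

text \<open>The term \<open>N\<close> is \<open>M\<close> relabelled: the free-variable occurrence at address \<open>b i j\<close>
  becomes \<open>y\<^sub>i\<close>, and every other variable \<open>x\<close> (in particular every binder) becomes \<open>\<rho> x\<close>, where
  \<open>\<rho>\<close> is a strictly monotone, type-preserving renaming into variables above all of \<open>Y\<close>.
  The extraction chain says that the free leaves of \<open>M\<close> are exactly the addresses \<open>b i j\<close>, with
  the right types, so domain, types, \<open>\<beta>\<close>-normality and stable part are preserved. The only
  issue is the HRM condition at applications. An application whose free variables are all free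
  in \<open>M\<close> is in the stable part, and extraction removes a leaf of its right argument before any leaf
  of its left argument; as the chain runs through the labels \<open>\<omega>\<^sub>m, \<dots>, \<omega>\<^sub>1\<close> in this
  order and \<open>Y\<close> is increasing, every new variable on the left is dominated by one on the right.
  Any other application has, by HRM, a variable bound outside it occurring in its right argument;
  after renaming this variable exceeds all new free variables.\<close>

section \<open>Terms\<close>

lemma subt_append: "subt S a = Some T \<Longrightarrow> subt S (a @ c) = subt T c"
  by (induction S a rule: subt.induct) (auto split: if_splits)

lemma fvs_subt: "subt S c = Some T \<Longrightarrow> fvs T \<subseteq> fvs S \<union> set (bvs S)"
  by (induction S c rule: subt.induct) (fastforce split: if_splits)+

lemma bvs_subt: "subt S c = Some T \<Longrightarrow> set (bvs T) \<subseteq> set (bvs S)"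
  by (induction S c rule: subt.induct) (fastforce split: if_splits)+

lemma hrm_subt: "hrm S \<Longrightarrow> subt S c = Some T \<Longrightarrow> hrm T"
  by (induction S c rule: subt.induct) (auto split: if_splits)

lemma subt_Lam_eq_Some:
  "subt (Lam x P) a = Some S \<longleftrightarrow> a = [] \<and> S = Lam x P \<or> (\<exists>c. a = 1 # c \<and> subt P c = Some S)"
  by (cases a) auto

lemma subt_App_eq_Some:
  "subt (App P Q) a = Some S \<longleftrightarrow> a = [] \<and> S = App P Q \<or>
     (\<exists>c. a = 1 # c \<and> subt P c = Some S) \<or> (\<exists>c. a = 2 # c \<and> subt Q c = Some S)"
  by (cases a) auto

fun hrm_root :: "trm \<Rightarrow> bool" where
  "hrm_root (Var x) = True"
| "hrm_root (Lam x P) = (x \<in> fvs P \<and> (\<forall>y\<in>fvs P. y \<le> x))"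
| "hrm_root (App P Q) = (\<forall>x\<in>fvs P. \<exists>y\<in>fvs Q. x \<le> y)"

lemma hrm_iff_hrm_root_subterms: "hrm T \<longleftrightarrow> (\<forall>a S. subt T a = Some S \<longrightarrow> hrm_root S)"
proof (induction T)
  case (Var x)
  then show ?case by (auto elim: subt.elims)
next
  case (Lam x P)
  have "(\<forall>a S. subt (Lam x P) a = Some S \<longrightarrow> hrm_root S) \<longleftrightarrow>
      hrm_root (Lam x P) \<and> (\<forall>c S. subt P c = Some S \<longrightarrow> hrm_root S)"
    by (auto simp: subt_Lam_eq_Some)
  then show ?case using Lam.IH by auto
next
  case (App P Q)
  have "(\<forall>a S. subt (App P Q) a = Some S \<longrightarrow> hrm_root S) \<longleftrightarrow> hrm_root (App P Q) \<and>
      (\<forall>c S. subt P c = Some S \<longrightarrow> hrm_root S) \<and> (\<forall>c S. subt Q c = Some S \<longrightarrow> hrm_root S)"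
    by (auto simp: subt_App_eq_Some)
  then show ?case using App.IH by auto
qed

text \<open>The variable \<open>x\<close> is bound by a \<open>\<lambda>\<close> above \<open>T\<close>, whose body contains \<open>y\<close>.\<close>
lemma hrm_bound_var_above:
  assumes "hrm S" "G \<inter> set (bvs S) = {}" "subt S c = Some T"
    and "x \<in> fvs T" "x \<notin> fvs S" "y \<in> fvs T" "y \<in> G"
  shows "y < x"
  using assms
proof (induction S c rule: subt.induct)
  case (2 z P i a)
  then have sP: "subt P a = Some T" by (simp split: if_splits)
  show ?case
  proof (cases "x \<in> fvs P")
    case True
    then have "y \<in> fvs P" "y \<noteq> z" using fvs_subt[OF sP] 2 by auto
    then show ?thesis using True 2 by fastforce
  next
    case False
    then show ?thesis using 2 sP by (auto split: if_splits)
  qed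
next
  case (3 P Q i a)
  then show ?case by (auto split: if_splits)
qed auto

lemma hrm_app_bound_var_dominated:
  assumes "hrm M" "set (bvs M) \<inter> fvs M = {}" "subt M a = Some (App P Q)"
    and "x \<in> fvs P" "x \<notin> fvs M"
  shows "\<exists>y\<in>fvs Q. x \<le> y \<and> y \<notin> fvs M"
proof -
  obtain y where y: "y \<in> fvs Q" "x \<le> y"
    using hrm_subt[OF assms(1,3)] assms(4) by auto
  have "y \<notin> fvs M"
  proof
    assume "y \<in> fvs M"
    then have "y < x"
      using hrm_bound_var_above[OF assms(1) _ assms(3), of "fvs M" x y] assms y by auto
    then show False using y(2) by simp
  qed
  then show ?thesis using y by blast
qed

lemma hrm_unstable_app_bound_var:
  assumes "hrm M" "set (bvs M) \<inter> fvs M = {}" "subt M a = Some (App P Q)"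
    and "\<not> fvs (App P Q) \<subseteq> fvs M"
  shows "\<exists>y\<in>fvs Q. y \<notin> fvs M"
proof -
  obtain x where "x \<in> fvs P \<and> x \<notin> fvs M \<or> x \<in> fvs Q \<and> x \<notin> fvs M"
    using assms(4) by auto
  then show ?thesis using hrm_app_bound_var_dominated[OF assms(1-3)] by blast
qed

inductive_cases has_type_VarE: "has_type \<Omega> (Var x) \<phi>"
inductive_cases has_type_LamE: "has_type \<Omega> (Lam x P) \<phi>"
inductive_cases has_type_AppE: "has_type \<Omega> (App P Q) \<phi>"

lemma has_type_unique: "has_type \<Omega> S \<phi> \<Longrightarrow> has_type \<Omega> S \<psi> \<Longrightarrow> \<phi> = \<psi>"
proof (induction arbitrary: \<psi> rule: has_type.induct)
  case (tVar x)
  then show ?case by (rule has_type_VarE) simp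
next
  case (tLam M \<psi>1 x)
  from tLam.prems obtain \<psi>2 where "has_type \<Omega> M \<psi>2" "\<psi> = Imp (\<Omega> x) \<psi>2"
    by (rule has_type_LamE) simp
  then show ?case using tLam.IH by simp
next
  case (tApp M \<chi> \<psi>1 N)
  from tApp.prems obtain \<chi>' where "has_type \<Omega> M (Imp \<chi>' \<psi>)" by (rule has_type_AppE) simp
  then show ?case using tApp.IH(1) by blast
qed

lemma has_type_subt: "has_type \<Omega> S \<phi> \<Longrightarrow> subt S c = Some T \<Longrightarrow> \<exists>\<psi>. has_type \<Omega> T \<psi>"
proof (induction arbitrary: c rule: has_type.induct)
  case (tVar x)
  then show ?case by (auto elim: subt.elims intro: has_type.tVar)
next
  case (tLam M \<psi> x)
  then show ?case using has_type.tLam[OF tLam.hyps] by (auto simp: subt_Lam_eq_Some)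
next
  case (tApp M \<chi> \<psi> N)
  then show ?case using has_type.tApp[OF tApp.hyps] by (auto simp: subt_App_eq_Some)
qed

lemma has_type_hrm: "has_type \<Omega> S \<phi> \<Longrightarrow> hrm S"
  by (cases rule: has_type.cases) auto

lemma blueprint_eq_F_iff:
  "blueprint \<Omega> M c = Some (F \<phi>) \<longleftrightarrow> (\<exists>x. subt M c = Some (Var x) \<and> x \<in> fvs M \<and> \<phi> = \<Omega> x)"
  unfolding blueprint_def by (auto split: option.splits trm.splits if_splits)

lemma blueprint_stable_App:
  "subt M a = Some (App P Q) \<Longrightarrow> fvs (App P Q) \<subseteq> fvs M \<Longrightarrow> \<exists>\<psi>. blueprint \<Omega> M a = Some (At \<psi>)"
  unfolding blueprint_def by auto

section \<open>Relabelling\<close>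

definition free_leaves :: "var set \<Rightarrow> trm \<Rightarrow> addr set" where
  "free_leaves V S = {c. \<exists>x\<in>V. subt S c = Some (Var x)}"

lemma free_leaves_Var: "free_leaves V (Var x) = (if x \<in> V then {[]} else {})"
  unfolding free_leaves_def by (auto elim: subt.elims)

lemma free_leaves_Lam: "free_leaves V (Lam x P) = Cons 1 ` free_leaves V P"
  unfolding free_leaves_def by (auto simp: subt_Lam_eq_Some)

lemma free_leaves_App: "free_leaves V (App P Q) = Cons 1 ` free_leaves V P \<union> Cons 2 ` free_leaves V Q"
  unfolding free_leaves_def by (auto simp: subt_App_eq_Some)

lemma free_leaves_subt: "subt S a = Some T \<Longrightarrow> c \<in> free_leaves V T \<Longrightarrow> a @ c \<in> free_leaves V S"
  unfolding free_leaves_def by (auto simp: subt_append)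

fun relabel :: "var set \<Rightarrow> (addr \<Rightarrow> var) \<Rightarrow> (var \<Rightarrow> var) \<Rightarrow> trm \<Rightarrow> trm" where
  "relabel V \<sigma> \<rho> (Var x) = Var (if x \<in> V then \<sigma> [] else \<rho> x)"
| "relabel V \<sigma> \<rho> (Lam x P) = Lam (\<rho> x) (relabel V (\<lambda>c. \<sigma> (1 # c)) \<rho> P)"
| "relabel V \<sigma> \<rho> (App P Q) = App (relabel V (\<lambda>c. \<sigma> (1 # c)) \<rho> P) (relabel V (\<lambda>c. \<sigma> (2 # c)) \<rho> Q)"

lemma subt_relabel:
  "subt (relabel V \<sigma> \<rho> S) c = map_option (relabel V (\<lambda>d. \<sigma> (c @ d)) \<rho>) (subt S c)"
  by (induction S c arbitrary: \<sigma> rule: subt.induct) auto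

lemma bvs_relabel: "bvs (relabel V \<sigma> \<rho> S) = map \<rho> (bvs S)"
  by (induction S arbitrary: \<sigma>) auto

lemma beta_normal_App_iff:
  "beta_normal (App P Q) \<longleftrightarrow> beta_normal P \<and> beta_normal Q \<and> (\<forall>x R. P \<noteq> Lam x R)"
  by (cases P) auto

lemma beta_normal_relabel: "beta_normal (relabel V \<sigma> \<rho> S) = beta_normal S"
proof (induction S arbitrary: \<sigma>)
  case (App P Q)
  have "(\<forall>x R. relabel V (\<lambda>c. \<sigma> (1 # c)) \<rho> P \<noteq> Lam x R) \<longleftrightarrow> (\<forall>x R. P \<noteq> Lam x R)"
    by (cases P) auto
  then show ?case using App.IH by (simp only: relabel.simps beta_normal_App_iff)
qed auto

lemma fvs_relabel:
  assumes "set (bvs S) \<inter> V = {}" "inj \<rho>" "\<forall>c\<in>free_leaves V S. \<forall>x. \<sigma> c \<noteq> \<rho> x"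
  shows "fvs (relabel V \<sigma> \<rho> S) = \<sigma> ` free_leaves V S \<union> \<rho> ` (fvs S - V)"
  using assms(1,3)
proof (induction S arbitrary: \<sigma>)
  case (Var x)
  then show ?case by (auto simp: free_leaves_Var)
next
  case (Lam x P)
  have "fvs (relabel V (\<lambda>c. \<sigma> (1 # c)) \<rho> P) = \<sigma> ` Cons 1 ` free_leaves V P \<union> \<rho> ` (fvs P - V)"
    using Lam by (simp add: free_leaves_Lam image_image)
  moreover have "\<rho> x \<notin> \<sigma> ` Cons 1 ` free_leaves V P"
    using Lam.prems(2) unfolding free_leaves_Lam by (metis imageE)
  moreover have "x \<notin> V" using Lam.prems(1) by simp
  ultimately show ?case using assms(2) by (auto simp: free_leaves_Lam inj_eq)
next
  case (App P Q)
  have "fvs (relabel V (\<lambda>c. \<sigma> (1 # c)) \<rho> P) = \<sigma> ` Cons 1 ` free_leaves V P \<union> \<rho> ` (fvs P - V)"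
    "fvs (relabel V (\<lambda>c. \<sigma> (2 # c)) \<rho> Q) = \<sigma> ` Cons 2 ` free_leaves V Q \<union> \<rho> ` (fvs Q - V)"
    using App.IH(1)[of "\<lambda>c. \<sigma> (1 # c)"] App.IH(2)[of "\<lambda>c. \<sigma> (2 # c)"] App.prems
    by (simp_all add: free_leaves_App image_image Int_Un_distrib2)
  then show ?case by (auto simp: free_leaves_App)
qed

lemma has_type_relabel:
  assumes "has_type \<Omega> S \<phi>" "hrm (relabel V \<sigma> \<rho> S)" "\<forall>x. \<Omega> (\<rho> x) = \<Omega> x"
    and "\<forall>c x. subt S c = Some (Var x) \<longrightarrow> x \<in> V \<longrightarrow> \<Omega> (\<sigma> c) = \<Omega> x"
  shows "has_type \<Omega> (relabel V \<sigma> \<rho> S) \<phi>"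
  using assms(1,2,4)
proof (induction arbitrary: \<sigma> rule: has_type.induct)
  case (tVar x)
  have "\<Omega> (if x \<in> V then \<sigma> [] else \<rho> x) = \<Omega> x"
    using tVar.prems(2) assms(3) by (auto dest: spec[of _ "[]"])
  then show ?case using has_type.tVar[of \<Omega> "if x \<in> V then \<sigma> [] else \<rho> x"] by simp
next
  case (tLam M \<psi> x)
  then have "has_type \<Omega> (relabel V (\<lambda>c. \<sigma> (1 # c)) \<rho> M) \<psi>" by auto
  then show ?case using tLam.prems(1) assms(3) has_type.tLam by fastforce
next
  case (tApp M \<chi> \<psi> N)
  have "has_type \<Omega> (relabel V (\<lambda>c. \<sigma> (1 # c)) \<rho> M) (Imp \<chi> \<psi>)"
    using tApp.IH(1)[of "\<lambda>c. \<sigma> (1 # c)"] tApp.prems by auto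
  moreover have "has_type \<Omega> (relabel V (\<lambda>c. \<sigma> (2 # c)) \<rho> N) \<chi>"
    using tApp.IH(2)[of "\<lambda>c. \<sigma> (2 # c)"] tApp.prems by auto
  ultimately show ?case using tApp.prems(1) by (auto intro: has_type.tApp)
qed

lemma type_preserving_renaming_above:
  fixes \<Omega> :: "var \<Rightarrow> 'a form" and K :: var
  assumes "\<forall>\<phi>. infinite {x. \<Omega> x = \<phi>}"
  obtains \<rho> where "strict_mono \<rho>" "\<And>x. \<Omega> (\<rho> x) = \<Omega> x" "\<And>x. K < \<rho> x"
proof -
  define next_var where "next_var r \<phi> = (LEAST v. r < v \<and> \<Omega> v = \<phi>)" for r \<phi>
  have next_var: "r < next_var r \<phi> \<and> \<Omega> (next_var r \<phi>) = \<phi>" for r \<phi>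
  proof -
    have "\<exists>v. r < v \<and> \<Omega> v = \<phi>" using assms infinite_nat_iff_unbounded by auto
    then show ?thesis unfolding next_var_def by (rule LeastI_ex)
  qed
  define \<rho> where "\<rho> = rec_nat (next_var K (\<Omega> 0)) (\<lambda>n r. next_var r (\<Omega> (Suc n)))"
  have mono: "strict_mono \<rho>"
    unfolding strict_mono_Suc_iff \<rho>_def using next_var by simp
  show thesis
  proof
    show "strict_mono \<rho>" by (rule mono)
    show "\<Omega> (\<rho> x) = \<Omega> x" for x
      unfolding \<rho>_def using next_var by (cases x) simp_all
    show "K < \<rho> x" for x
      using next_var[of K "\<Omega> 0"] strict_mono_less_eq[OF mono, of 0 x] unfolding \<rho>_def by simp
  qed
qed

locale relabelling =
  fixes \<Omega> :: "var \<Rightarrow> 'a form" and M :: trm and \<sigma> :: "addr \<Rightarrow> var" and \<rho> :: "var \<Rightarrow> var"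
  assumes M_NF: "M \<in> LambdaNF \<Omega>"
    and \<rho>_strict_mono: "strict_mono \<rho>"
    and \<rho>_type: "\<And>x. \<Omega> (\<rho> x) = \<Omega> x"
    and \<sigma>_below_\<rho>: "\<And>c x. c \<in> free_leaves (fvs M) M \<Longrightarrow> \<sigma> c < \<rho> x"
    and \<sigma>_type: "\<And>c x. subt M c = Some (Var x) \<Longrightarrow> x \<in> fvs M \<Longrightarrow> \<Omega> (\<sigma> c) = \<Omega> x"
    and \<sigma>_ordered: "\<And>a P Q c. subt M a = Some (App P Q) \<Longrightarrow> fvs (App P Q) \<subseteq> fvs M \<Longrightarrow>
      c \<in> free_leaves (fvs M) P \<Longrightarrow> \<exists>d\<in>free_leaves (fvs M) Q. \<sigma> (a @ 1 # c) \<le> \<sigma> (a @ 2 # d)"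
begin

abbreviation relabel_at :: "addr \<Rightarrow> trm \<Rightarrow> trm" where
  "relabel_at a S \<equiv> relabel (fvs M) (\<lambda>d. \<sigma> (a @ d)) \<rho> S"

definition N :: trm where
  "N = relabel (fvs M) \<sigma> \<rho> M"

lemma M_is_term: "is_term M" and M_beta_normal: "beta_normal M"
  and M_typed: "\<exists>\<phi>. has_type \<Omega> M \<phi>"
  using M_NF unfolding LambdaNF_def by auto

lemma M_hrm: "hrm M"
  using M_typed has_type_hrm by blast

lemma bvs_fvs_disjoint: "set (bvs M) \<inter> fvs M = {}"
  using M_is_term unfolding is_term_def by blast

lemma \<rho>_inj: "inj \<rho>"
  using \<rho>_strict_mono strict_mono_imp_inj_on by blast

lemma subt_N: "subt N a = map_option (relabel_at a) (subt M a)"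
  unfolding N_def by (rule subt_relabel)

lemma fvs_relabel_at:
  assumes "subt M a = Some S"
  shows "fvs (relabel_at a S) = (\<lambda>d. \<sigma> (a @ d)) ` free_leaves (fvs M) S \<union> \<rho> ` (fvs S - fvs M)"
proof (rule fvs_relabel)
  show "set (bvs S) \<inter> fvs M = {}" using bvs_subt[OF assms] bvs_fvs_disjoint by auto
  show "\<forall>c\<in>free_leaves (fvs M) S. \<forall>x. \<sigma> (a @ c) \<noteq> \<rho> x"
    using \<sigma>_below_\<rho> free_leaves_subt[OF assms] by (metis less_irrefl)
qed (rule \<rho>_inj)

lemma fvs_N: "fvs N = \<sigma> ` free_leaves (fvs M) M"
  using fvs_relabel_at[of "[]" M] unfolding N_def by simp

lemma bound_var_not_in_fvs_N: "\<rho> x \<notin> fvs N"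
  unfolding fvs_N using \<sigma>_below_\<rho> by (metis imageE less_irrefl)

lemma hrm_root_relabel_at_Lam:
  assumes aS: "subt M a = Some (Lam x P)"
  shows "hrm_root (relabel_at a (Lam x P))"
proof -
  have aP: "subt M (a @ [1]) = Some P" using subt_append[OF aS, of "[1]"] by simp
  have "x \<notin> fvs M" using bvs_subt[OF aS] bvs_fvs_disjoint by auto
  moreover have "x \<in> fvs P" "\<forall>y\<in>fvs P. y \<le> x" using hrm_subt[OF M_hrm aS] by auto
  moreover have "\<sigma> (a @ 1 # c) < \<rho> x" if "c \<in> free_leaves (fvs M) P" for c
    using \<sigma>_below_\<rho> free_leaves_subt[OF aP that] by simp
  ultimately show ?thesis
    using fvs_relabel_at[OF aP] \<rho>_strict_mono by (auto simp: strict_mono_less_eq less_imp_le)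
qed

lemma hrm_root_relabel_at_App:
  assumes aS: "subt M a = Some (App P Q)"
  shows "hrm_root (relabel_at a (App P Q))"
proof -
  have aP: "subt M (a @ [1]) = Some P" and aQ: "subt M (a @ [2]) = Some Q"
    using subt_append[OF aS, of "[1]"] subt_append[OF aS, of "[2]"] by simp_all
  have bound_var_right: "\<rho> y \<in> fvs (relabel_at (a @ [2]) Q)" if "y \<in> fvs Q" "y \<notin> fvs M" for y
    using that fvs_relabel_at[OF aQ] by blast
  have "\<exists>w\<in>fvs (relabel_at (a @ [2]) Q). z \<le> w" if z: "z \<in> fvs (relabel_at (a @ [1]) P)" for z
  proof -
    consider x where "x \<in> fvs P" "x \<notin> fvs M" "z = \<rho> x"
      | c where "c \<in> free_leaves (fvs M) P" "z = \<sigma> (a @ 1 # c)"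
      using z fvs_relabel_at[OF aP] by auto
    then show ?thesis
    proof cases
      case 1
      then obtain y where y: "y \<in> fvs Q" "x \<le> y" "y \<notin> fvs M"
        using hrm_app_bound_var_dominated[OF M_hrm bvs_fvs_disjoint aS] by blast
      then have "\<rho> x \<le> \<rho> y" using \<rho>_strict_mono by (simp add: strict_mono_less_eq)
      then show ?thesis using 1 bound_var_right[OF y(1,3)] by blast
    next
      case 2
      show ?thesis
      proof (cases "fvs (App P Q) \<subseteq> fvs M")
        case True
        then obtain d where "d \<in> free_leaves (fvs M) Q" "\<sigma> (a @ 1 # c) \<le> \<sigma> (a @ 2 # d)"
          using \<sigma>_ordered[OF aS _ 2(1)] by blast
        then show ?thesis using 2(2) fvs_relabel_at[OF aQ] by auto
      next
        case False
        then obtain y where "y \<in> fvs Q" "y \<notin> fvs M"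
          using hrm_unstable_app_bound_var[OF M_hrm bvs_fvs_disjoint aS] by blast
        moreover have "z < \<rho> y"
          using 2 \<sigma>_below_\<rho> free_leaves_subt[OF aP 2(1)] by simp
        ultimately show ?thesis using bound_var_right by (auto intro: less_imp_le)
      qed
    qed
  qed
  then show ?thesis by simp
qed

lemma hrm_N: "hrm N"
  unfolding hrm_iff_hrm_root_subterms
proof (intro allI impI)
  fix a S' assume "subt N a = Some S'"
  then obtain S where aS: "subt M a = Some S" and S': "S' = relabel_at a S"
    using subt_N[of a] by auto
  show "hrm_root S'"
    using hrm_root_relabel_at_Lam hrm_root_relabel_at_App aS unfolding S' by (cases S) auto
qed

lemma has_type_relabel_at:
  assumes aS: "subt M a = Some S" and "has_type \<Omega> S \<psi>"
  shows "has_type \<Omega> (relabel_at a S) \<psi>"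
proof (rule has_type_relabel[OF assms(2)])
  show "hrm (relabel_at a S)" using hrm_subt[OF hrm_N] subt_N[of a] aS by simp
  show "\<forall>c x. subt S c = Some (Var x) \<longrightarrow> x \<in> fvs M \<longrightarrow> \<Omega> (\<sigma> (a @ c)) = \<Omega> x"
    using \<sigma>_type subt_append[OF aS] by auto
qed (simp add: \<rho>_type)

lemma has_type_N: "has_type \<Omega> M \<phi> \<Longrightarrow> has_type \<Omega> N \<phi>"
  using has_type_relabel_at[of "[]" M \<phi>] unfolding N_def by simp

lemma is_term_N: "is_term N"
proof -
  have "distinct (bvs N)"
    using M_is_term \<rho>_inj unfolding N_def bvs_relabel is_term_def by (simp add: distinct_map inj_on_def)
  moreover have "set (bvs N) \<inter> fvs N = {}"
    using bound_var_not_in_fvs_N unfolding N_def bvs_relabel by auto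
  ultimately show ?thesis unfolding is_term_def by blast
qed

lemma N_LambdaNF: "N \<in> LambdaNF \<Omega>"
  using is_term_N M_beta_normal M_typed has_type_N
  unfolding LambdaNF_def N_def by (auto simp: beta_normal_relabel)

lemma tdom_N: "tdom N = tdom M"
  unfolding tdom_def using subt_N by auto

lemma relabel_at_fvs_in_N_iff:
  assumes aS: "subt M a = Some S"
  shows "fvs (relabel_at a S) \<subseteq> fvs N \<longleftrightarrow> fvs S \<subseteq> fvs M"
proof
  assume sub: "fvs (relabel_at a S) \<subseteq> fvs N"
  show "fvs S \<subseteq> fvs M"
  proof
    fix x assume "x \<in> fvs S"
    show "x \<in> fvs M"
    proof (rule ccontr)
      assume "x \<notin> fvs M"
      then have "\<rho> x \<in> fvs (relabel_at a S)" using fvs_relabel_at[OF aS] \<open>x \<in> fvs S\<close> by blast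
      then show False using sub bound_var_not_in_fvs_N by blast
    qed
  qed
next
  assume "fvs S \<subseteq> fvs M"
  then have "fvs (relabel_at a S) = (\<lambda>d. \<sigma> (a @ d)) ` free_leaves (fvs M) S"
    using fvs_relabel_at[OF aS] by auto
  then show "fvs (relabel_at a S) \<subseteq> fvs N"
    unfolding fvs_N using free_leaves_subt[OF aS] by auto
qed

lemma blueprint_N: "blueprint \<Omega> N = blueprint \<Omega> M"
proof
  fix a
  show "blueprint \<Omega> N a = blueprint \<Omega> M a"
  proof (cases "subt M a")
    case None
    then show ?thesis using subt_N[of a] unfolding blueprint_def by simp
  next
    case (Some S)
    have type_eq: "(THE \<psi>. has_type \<Omega> (relabel_at a S) \<psi>) = (THE \<psi>. has_type \<Omega> S \<psi>)"
    proof -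
      obtain \<psi> where "has_type \<Omega> S \<psi>" using has_type_subt M_typed Some by blast
      then show ?thesis using has_type_relabel_at[OF Some] has_type_unique by (metis the_equality)
    qed
    show ?thesis
    proof (cases S)
      case (Var x)
      then show ?thesis using Some subt_N[of a] relabel_at_fvs_in_N_iff[OF Some] \<sigma>_type[of a x]
        unfolding blueprint_def by auto
    next
      case (App P Q)
      then show ?thesis using Some subt_N[of a] relabel_at_fvs_in_N_iff[OF Some] type_eq
        unfolding blueprint_def by auto
    qed (use Some subt_N[of a] in \<open>simp add: blueprint_def\<close>)
  qed
qed

lemma subt_N_eq_free_Var:
  assumes "y \<in> fvs N"
  shows "subt N c = Some (Var y) \<longleftrightarrow> c \<in> free_leaves (fvs M) M \<and> \<sigma> c = y"
proof
  assume "subt N c = Some (Var y)"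
  then obtain x where x: "subt M c = Some (Var x)" "y = (if x \<in> fvs M then \<sigma> c else \<rho> x)"
    using subt_N[of c] by (auto elim: relabel.elims)
  then have "x \<in> fvs M" using assms bound_var_not_in_fvs_N by (metis (full_types))
  then show "c \<in> free_leaves (fvs M) M \<and> \<sigma> c = y" using x unfolding free_leaves_def by auto
next
  assume "c \<in> free_leaves (fvs M) M \<and> \<sigma> c = y"
  then show "subt N c = Some (Var y)" using subt_N[of c] unfolding free_leaves_def by auto
qed

end

section \<open>Extraction chains\<close>

lemma bapp_simps:
  "bapp \<psi> \<gamma> \<alpha> [] = Some (At \<psi>)" "bapp \<psi> \<gamma> \<alpha> (Suc 0 # d) = \<gamma> d" "bapp \<psi> \<gamma> \<alpha> (2 # d) = \<alpha> d"
  "k \<noteq> Suc 0 \<Longrightarrow> k \<noteq> 2 \<Longrightarrow> bapp \<psi> \<gamma> \<alpha> (k # d) = None"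
  by (auto simp: bapp_def)

lemma bstar_pair_simps:
  "bstar [([Suc 0], \<gamma>), ([2], \<beta>)] [] = None" "bstar [([Suc 0], \<gamma>), ([2], \<beta>)] (Suc 0 # d) = \<gamma> d"
  "bstar [([Suc 0], \<gamma>), ([2], \<beta>)] (2 # d) = \<beta> d"
  "k \<noteq> Suc 0 \<Longrightarrow> k \<noteq> 2 \<Longrightarrow> bstar [([Suc 0], \<gamma>), ([2], \<beta>)] (k # d) = None"
  by auto

lemma bstar_zip_eq_None: "\<forall>c\<in>set cs. \<not> prefix c d \<Longrightarrow> bstar (zip cs gs) d = None"
proof (induction cs arbitrary: gs)
  case (Cons c cs)
  then show ?case by (cases gs) auto
qed simp

lemma prefix_right_not_left: "prefix (a @ [2]) c \<Longrightarrow> \<not> prefix (a @ [1]) (c :: addr)"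
  by (auto simp: prefix_def)

lemma extr_source_leaf: "extr \<alpha> c \<phi> \<beta> \<Longrightarrow> \<alpha> c = Some (F \<phi>)"
  by (induction rule: extr.induct) (auto simp: bleaf_def bapp_simps)

lemma extr_removes_leaf: "extr \<alpha> c \<phi> \<beta> \<Longrightarrow> \<beta> c = None"
  by (induction rule: extr.induct) auto

lemma extr_result_agrees: "extr \<alpha> c \<phi> \<beta> \<Longrightarrow> \<beta> d \<noteq> None \<Longrightarrow> \<beta> d = \<alpha> d"
proof (induction arbitrary: d rule: extr.induct)
  case (ex_app \<alpha> a \<phi> \<beta> \<gamma> \<psi>)
  then show ?case by (auto simp: bapp_def)
next
  case (ex_ctx \<alpha> a \<phi> \<beta> b cs gs)
  then show ?case by (auto simp: prefix_def)
qed simp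

lemma extr_removed_cases:
  "extr \<alpha> c \<phi> \<beta> \<Longrightarrow> \<alpha> d \<noteq> None \<Longrightarrow> \<beta> d = None \<Longrightarrow>
     d = c \<or> (\<exists>\<psi>. \<alpha> d = Some (At \<psi>) \<and> prefix (d @ [2]) c)"
proof (induction arbitrary: d rule: extr.induct)
  case (ex_leaf \<phi>)
  then show ?case by (auto simp: bleaf_def split: if_splits)
next
  case (ex_app \<alpha> a \<phi> \<beta> \<gamma> \<psi>)
  show ?case
  proof (cases d)
    case (Cons k d')
    show ?thesis
    proof (cases "k = 2")
      case True
      then have "\<alpha> d' \<noteq> None" "\<beta> d' = None"
        using ex_app.prems Cons by (simp_all add: bapp_simps bstar_pair_simps del: bstar.simps)
      from ex_app.IH[OF this] show ?thesis
        using Cons True by (auto simp: bapp_simps simp del: bstar.simps)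
    next
      case False
      then show ?thesis using ex_app.prems Cons
        by (cases "k = 1") (auto simp: bapp_simps bstar_pair_simps simp del: bstar.simps)
    qed
  qed (simp add: bapp_simps)
next
  case (ex_ctx \<alpha> a \<phi> \<beta> b cs gs)
  show ?case
  proof (cases "prefix b d")
    case True
    then obtain d' where "d = b @ d'" by (auto simp: prefix_def)
    then show ?thesis using ex_ctx.prems ex_ctx.IH[of d'] by auto
  qed (use ex_ctx.prems in simp)
qed

lemma extr_passes_right_of_app:
  "extr \<alpha> c \<phi> \<beta> \<Longrightarrow> \<alpha> d = Some (At \<psi>) \<Longrightarrow> prefix d c \<Longrightarrow> prefix (d @ [2]) c"
proof (induction arbitrary: d rule: extr.induct)
  case (ex_leaf \<phi>)
  then show ?case by (auto simp: bleaf_def)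
next
  case (ex_app \<alpha> a \<phi> \<beta> \<gamma> \<psi>')
  then show ?case by (cases d) (auto simp: bapp_def)
next
  case (ex_ctx \<alpha> a \<phi> \<beta> b cs gs)
  show ?case
  proof (cases "prefix b d")
    case True
    then obtain d' where "d = b @ d'" by (auto simp: prefix_def)
    then show ?thesis using ex_ctx.prems ex_ctx.IH[of d'] by simp
  next
    case False
    then have "prefix d b"
      using prefix_same_cases[OF ex_ctx.prems(2), of b] by auto
    have "\<forall>c\<in>set cs. \<not> prefix c d"
    proof
      fix c assume "c \<in> set cs"
      then obtain j where j: "j < length cs" "cs ! j = c" by (auto simp: in_set_conv_nth)
      then have "\<not> prefix c b"
        using ex_ctx.hyps(5) unfolding pairwise_incomparable_def
        by (metis length_Cons nat.simps(3) not_less_eq nth_Cons_0 nth_Cons_Suc zero_less_Suc)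
      then show "\<not> prefix c d" using \<open>prefix d b\<close> prefix_order.trans by blast
    qed
    then have "bstar (zip cs gs) d = None" by (rule bstar_zip_eq_None)
    then show ?thesis using ex_ctx.prems False by simp
  qed
qed

lemma extr_chain_source_leaves:
  "extr_chain \<alpha> s \<gamma> \<Longrightarrow> k < length s \<Longrightarrow> \<alpha> (fst (s ! k)) = Some (F (snd (s ! k)))"
proof (induction arbitrary: k rule: extr_chain.induct)
  case (2 \<alpha> a \<phi> \<beta> s \<gamma>)
  show ?case
  proof (cases k)
    case 0
    then show ?thesis using extr_source_leaf[OF 2(1)] by simp
  next
    case (Suc j)
    then have "\<beta> (fst (s ! j)) = Some (F (snd (s ! j)))" using 2 by simp
    then show ?thesis using extr_result_agrees[OF 2(1), of "fst (s ! j)"] Suc by simp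
  qed
qed simp

lemma extr_chain_distinct: "extr_chain \<alpha> s \<gamma> \<Longrightarrow> distinct (map fst s)"
proof (induction rule: extr_chain.induct)
  case (2 \<alpha> a \<phi> \<beta> s \<gamma>)
  have "a \<notin> fst ` set s"
  proof
    assume "a \<in> fst ` set s"
    then obtain k where "k < length s" "fst (s ! k) = a" by (auto simp: in_set_conv_nth)
    then show False
      using extr_chain_source_leaves[OF 2(2)] extr_removes_leaf[OF 2(1)] by fastforce
  qed
  then show ?case using 2 by simp
qed simp

lemma extr_chain_extracts_leaf:
  "extr_chain \<alpha> s \<gamma> \<Longrightarrow> \<alpha> d = Some (F \<phi>) \<Longrightarrow> d \<in> fst ` set s \<or> \<gamma> d = Some (F \<phi>)"
proof (induction rule: extr_chain.induct)
  case (2 \<alpha> a \<phi>' \<beta> s \<gamma>)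
  show ?case
  proof (cases "\<beta> d = None")
    case True
    then have "d = a" using extr_removed_cases[OF 2(1), of d] 2(4) by auto
    then show ?thesis by simp
  next
    case False
    then have "\<beta> d = Some (F \<phi>)" using extr_result_agrees[OF 2(1), of d] 2(4) by simp
    then show ?thesis using 2(3) by auto
  qed
qed simp

lemma extr_chain_app_right_first:
  assumes "extr_chain \<alpha> s \<gamma>" "\<alpha> a = Some (At \<psi>)"
  shows "\<gamma> a = Some (At \<psi>) \<or>
    (\<exists>k0<length s. prefix (a @ [2]) (fst (s ! k0)) \<and> (\<forall>k\<le>k0. \<not> prefix (a @ [1]) (fst (s ! k))))"
  using assms
proof (induction rule: extr_chain.induct)
  case (2 \<alpha> a0 \<phi> \<beta> s \<gamma>)
  show ?case
  proof (cases "\<beta> a = None")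
    case True
    then have "prefix (a @ [2]) a0"
      using extr_removed_cases[OF 2(1), of a] extr_source_leaf[OF 2(1)] 2(4) by auto
    then show ?thesis using prefix_right_not_left by (intro disjI2 exI[of _ 0]) auto
  next
    case False
    then have "\<beta> a = Some (At \<psi>)" using extr_result_agrees[OF 2(1), of a] 2(4) by simp
    have a0: "\<not> prefix (a @ [1]) a0"
    proof
      assume "prefix (a @ [1]) a0"
      then have "prefix a a0" by (auto simp: prefix_def)
      then show False
        using \<open>prefix (a @ [1]) a0\<close> extr_passes_right_of_app[OF 2(1) 2(4)] prefix_right_not_left
        by blast
    qed
    from 2(3)[OF \<open>\<beta> a = Some (At \<psi>)\<close>] show ?thesis
    proof (elim disjE exE conjE)
      fix k0 assume k0: "k0 < length s" "prefix (a @ [2]) (fst (s ! k0))"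
        and before: "\<forall>k\<le>k0. \<not> prefix (a @ [1]) (fst (s ! k))"
      have "\<forall>k\<le>Suc k0. \<not> prefix (a @ [1]) (fst (((a0, \<phi>) # s) ! k))"
      proof (intro allI impI)
        fix k assume "k \<le> Suc k0"
        then show "\<not> prefix (a @ [1]) (fst (((a0, \<phi>) # s) ! k))"
          using a0 before by (cases k) auto
      qed
      then show ?thesis using k0 by (intro disjI2 exI[of _ "Suc k0"]) auto
    qed simp
  qed
qed simp

lemma extr_chain_leaf_var:
  assumes "extr_chain (blueprint \<Omega> M) s \<gamma>" "(c, \<phi>) \<in> set s"
  shows "\<exists>x. subt M c = Some (Var x) \<and> x \<in> fvs M \<and> \<Omega> x = \<phi>"
proof -
  obtain k where "k < length s" "s ! k = (c, \<phi>)" using assms(2) by (auto simp: in_set_conv_nth)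
  then show ?thesis using extr_chain_source_leaves[OF assms(1)] by (force simp: blueprint_eq_F_iff)
qed

lemma extr_chain_free_leaves:
  assumes "extr_chain (blueprint \<Omega> M) s Map.empty"
  shows "free_leaves (fvs M) M = fst ` set s"
proof
  show "free_leaves (fvs M) M \<subseteq> fst ` set s"
    using extr_chain_extracts_leaf[OF assms]
    unfolding free_leaves_def by (force simp: blueprint_eq_F_iff)
  show "fst ` set s \<subseteq> free_leaves (fvs M) M"
    using extr_chain_leaf_var[OF assms] unfolding free_leaves_def by force
qed

lemma extr_chain_stable_app_right_first:
  assumes "extr_chain (blueprint \<Omega> M) s Map.empty"
    and "subt M a = Some (App P Q)" "fvs (App P Q) \<subseteq> fvs M"
  shows "\<exists>k0<length s. prefix (a @ [2]) (fst (s ! k0)) \<and> (\<forall>k\<le>k0. \<not> prefix (a @ [1]) (fst (s ! k)))"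
  using blueprint_stable_App[OF assms(2,3)] extr_chain_app_right_first[OF assms(1)] by fastforce

lemma relabelling_of_extr_chain:
  assumes "M \<in> LambdaNF \<Omega>" and chain: "extr_chain (blueprint \<Omega> M) s Map.empty"
    and "strict_mono \<rho>" "\<And>x. \<Omega> (\<rho> x) = \<Omega> x"
    and below: "\<And>c \<phi> x. (c, \<phi>) \<in> set s \<Longrightarrow> \<sigma> c < \<rho> x"
    and typed: "\<And>c \<phi>. (c, \<phi>) \<in> set s \<Longrightarrow> \<Omega> (\<sigma> c) = \<phi>"
    and antitone: "\<And>k k'. k < k' \<Longrightarrow> k' < length s \<Longrightarrow> \<sigma> (fst (s ! k')) \<le> \<sigma> (fst (s ! k))"
  shows "relabelling \<Omega> M \<sigma> \<rho>"
proof
  note leaves = extr_chain_free_leaves[OF chain]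
  show "\<sigma> c < \<rho> x" if "c \<in> free_leaves (fvs M) M" for c x
  proof -
    have "c \<in> fst ` set s" using that leaves by simp
    then obtain \<phi> where "(c, \<phi>) \<in> set s" by auto
    then show ?thesis by (rule below)
  qed
  show "\<Omega> (\<sigma> c) = \<Omega> x" if "subt M c = Some (Var x)" "x \<in> fvs M" for c x
  proof -
    have "c \<in> fst ` set s" using that leaves unfolding free_leaves_def by blast
    then obtain \<phi> where "(c, \<phi>) \<in> set s" by auto
    then obtain y where "subt M c = Some (Var y)" "\<Omega> y = \<phi>" using extr_chain_leaf_var[OF chain] by blast
    then show ?thesis using typed[OF \<open>(c, \<phi>) \<in> set s\<close>] that(1) by simp
  qed
  show "\<exists>d\<in>free_leaves (fvs M) Q. \<sigma> (a @ 1 # c) \<le> \<sigma> (a @ 2 # d)"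
    if aS: "subt M a = Some (App P Q)" and stable: "fvs (App P Q) \<subseteq> fvs M"
      and c: "c \<in> free_leaves (fvs M) P" for a P Q c
  proof -
    have "subt M (a @ [1]) = Some P" using subt_append[OF aS, of "[1]"] by simp
    from free_leaves_subt[OF this c] have "a @ 1 # c \<in> fst ` set s" using leaves by simp
    then obtain k where k: "k < length s" "fst (s ! k) = a @ 1 # c" by (auto simp: in_set_conv_nth)
    obtain k0 where k0: "k0 < length s" "prefix (a @ [2]) (fst (s ! k0))"
      and left_later: "\<forall>k\<le>k0. \<not> prefix (a @ [1]) (fst (s ! k))"
      using extr_chain_stable_app_right_first[OF chain aS stable] by blast
    have "prefix (a @ [1]) (a @ 1 # c)" unfolding prefix_def by simp
    then have "\<not> k \<le> k0" using left_later k(2) by auto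
    then have "k0 < k" by simp
    then have "\<sigma> (a @ 1 # c) \<le> \<sigma> (fst (s ! k0))" using antitone[OF _ k(1)] k(2) by simp
    moreover obtain d where d: "fst (s ! k0) = a @ 2 # d" using k0(2) by (auto simp: prefix_def)
    moreover have "d \<in> free_leaves (fvs M) Q"
    proof -
      have "fst (s ! k0) \<in> fst ` set s" using k0(1) by simp
      then have "a @ 2 # d \<in> free_leaves (fvs M) M" using d leaves by simp
      then show ?thesis using subt_append[OF aS, of "2 # d"] unfolding free_leaves_def by simp
    qed
    ultimately show ?thesis by auto
  qed
qed (use assms in auto)

section \<open>Relabelling along the steps of the chain\<close>

definition step_labels :: "nat \<Rightarrow> (nat \<Rightarrow> nat) \<Rightarrow> (nat \<times> nat) list" where
  "step_labels m p = concat (map (\<lambda>i. map (\<lambda>j. (i, j)) [0..<Suc (p i)]) (rev [1..<Suc m]))"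

lemma steps_eq_map_step_labels: "steps m \<omega> p b = map (\<lambda>(i, j). (b i j, \<omega> i)) (step_labels m p)"
  unfolding steps_def step_labels_def by (simp add: map_concat comp_def)

lemma step_labels_Suc:
  "step_labels (Suc m) p = map (\<lambda>j. (Suc m, j)) [0..<Suc (p (Suc m))] @ step_labels m p"
  unfolding step_labels_def by simp

lemma set_step_labels: "set (step_labels m p) = {(i, j). 1 \<le> i \<and> i \<le> m \<and> j \<le> p i}"
  by (induction m) (auto simp: step_labels_def[of 0] step_labels_Suc le_Suc_eq)

lemma step_labels_antitone:
  assumes "k < k'" "k' < length (step_labels m p)"
  shows "fst (step_labels m p ! k') \<le> fst (step_labels m p ! k)"
proof -
  have "sorted_wrt (\<ge>) (map fst (step_labels m p))"
  proof (induction m)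
    case (Suc m)
    have "\<forall>x\<in>set (step_labels m p). fst x \<le> Suc m" using set_step_labels[of m p] by auto
    then show ?case using Suc by (auto simp: step_labels_Suc sorted_wrt_append sorted_wrt_map)
  qed (simp add: step_labels_def)
  then show ?thesis using assms by (auto simp: sorted_wrt_iff_nth_less)
qed

text \<open>Off the step addresses the value is unspecified; only free leaves are ever looked up.\<close>
definition leaf_target :: "(nat \<Rightarrow> nat \<Rightarrow> addr) \<Rightarrow> var list \<Rightarrow> (nat \<times> nat) list \<Rightarrow> addr \<Rightarrow> var" where
  "leaf_target b Y t c = the (map_of (map (\<lambda>(i, j). (b i j, Y ! (i - 1))) t) c)"

lemma leaf_target_eq:
  assumes "distinct (map (\<lambda>(i, j). b i j) t)" "(i, j) \<in> set t"
  shows "leaf_target b Y t (b i j) = Y ! (i - 1)"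
proof -
  have "distinct (map fst (map (\<lambda>(i, j). (b i j, Y ! (i - 1))) t))"
    using assms(1) by (simp add: comp_def case_prod_unfold)
  moreover have "(b i j, Y ! (i - 1)) \<in> set (map (\<lambda>(i, j). (b i j, Y ! (i - 1))) t)"
    using assms(2) by force
  ultimately show ?thesis unfolding leaf_target_def by (simp add: map_of_is_SomeI)
qed

lemma extr_chain_steps_distinct:
  "extr_chain \<alpha> (steps m \<omega> p b) \<gamma> \<Longrightarrow> distinct (map (\<lambda>(i, j). b i j) (step_labels m p))"
  using extr_chain_distinct[of \<alpha> "steps m \<omega> p b" \<gamma>]
  by (simp add: steps_eq_map_step_labels comp_def case_prod_unfold)

lemma relabelling_leaf_target:
  assumes M_NF: "M \<in> LambdaNF \<Omega>" and chain: "extr_chain (blueprint \<Omega> M) (steps m \<omega> p b) Map.empty"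
    and Y: "sorted Y" "length Y = m" "map \<Omega> Y = map \<omega> [1..<Suc m]"
    and \<rho>: "strict_mono \<rho>" "\<And>x. \<Omega> (\<rho> x) = \<Omega> x" "\<And>x. sum_list Y < \<rho> x"
  shows "relabelling \<Omega> M (leaf_target b Y (step_labels m p)) \<rho>"
proof (rule relabelling_of_extr_chain[OF M_NF chain \<rho>(1,2)])
  let ?t = "step_labels m p" and ?\<sigma> = "leaf_target b Y (step_labels m p)"
  have target: "?\<sigma> (b i j) = Y ! (i - 1)" and index: "1 \<le> i" "i - 1 < length Y"
    if "(i, j) \<in> set ?t" for i j
    using that leaf_target_eq[OF extr_chain_steps_distinct[OF chain]] Y(2)
    unfolding set_step_labels by auto
  have step: "\<exists>i j. (i, j) \<in> set ?t \<and> c = b i j \<and> \<phi> = \<omega> i" if "(c, \<phi>) \<in> set (steps m \<omega> p b)" for c \<phi>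
    using that unfolding steps_eq_map_step_labels by auto
  show "?\<sigma> c < \<rho> x" if c: "(c, \<phi>) \<in> set (steps m \<omega> p b)" for c \<phi> x
  proof -
    obtain i j where "(i, j) \<in> set ?t" "c = b i j" using step[OF c] by blast
    then have "?\<sigma> c \<le> sum_list Y" using target index by (simp add: member_le_sum_list)
    then show ?thesis using \<rho>(3) by (rule le_less_trans)
  qed
  show "\<Omega> (?\<sigma> c) = \<phi>" if c: "(c, \<phi>) \<in> set (steps m \<omega> p b)" for c \<phi>
  proof -
    obtain i j where ij: "(i, j) \<in> set ?t" "c = b i j" "\<phi> = \<omega> i" using step[OF c] by blast
    then have "\<Omega> (Y ! (i - 1)) = map \<omega> [1..<Suc m] ! (i - 1)"
      using index[OF ij(1)] Y(3) by (metis nth_map)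
    then show ?thesis using ij index[OF ij(1)] Y(2) target by (simp del: upt_Suc)
  qed
  show "?\<sigma> (fst (steps m \<omega> p b ! k')) \<le> ?\<sigma> (fst (steps m \<omega> p b ! k))"
    if "k < k'" "k' < length (steps m \<omega> p b)" for k k'
  proof -
    have k: "k < length ?t" "k' < length ?t" using that by (simp_all add: steps_eq_map_step_labels)
    obtain i j i' j' where ij: "?t ! k = (i, j)" "?t ! k' = (i', j')" by fastforce
    then have "(i, j) \<in> set ?t" "(i', j') \<in> set ?t" using k nth_mem by metis+
    moreover have "i' \<le> i" using step_labels_antitone[OF that(1) k(2)] ij by simp
    ultimately have "Y ! (i' - 1) \<le> Y ! (i - 1)"
      using index Y(1) by (simp add: sorted_iff_nth_mono)
    then show ?thesis using k ij target \<open>(i, j) \<in> set ?t\<close> \<open>(i', j') \<in> set ?t\<close>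
      by (simp add: steps_eq_map_step_labels)
  qed
qed

lemma extr_chain_steps_free_leaves:
  "extr_chain (blueprint \<Omega> M) (steps m \<omega> p b) Map.empty \<Longrightarrow>
     free_leaves (fvs M) M = (\<lambda>(i, j). b i j) ` set (step_labels m p)"
  by (simp add: extr_chain_free_leaves steps_eq_map_step_labels image_image case_prod_unfold)

locale step_relabelling =
  relabelling \<Omega> M "leaf_target b Y (step_labels m p)" \<rho>
  for \<Omega> :: "var \<Rightarrow> 'a form" and M m \<omega> p b Y \<rho> +
  assumes chain: "extr_chain (blueprint \<Omega> M) (steps m \<omega> p b) Map.empty"
    and Y_sorted: "sorted_wrt (<) Y" and Y_length: "length Y = m"
begin

lemma leaf_target_step:
  "(i, j) \<in> set (step_labels m p) \<Longrightarrow> leaf_target b Y (step_labels m p) (b i j) = Y ! (i - 1)"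
  using leaf_target_eq[OF extr_chain_steps_distinct[OF chain]] .

lemma free_leaves_M: "free_leaves (fvs M) M = (\<lambda>(i, j). b i j) ` set (step_labels m p)"
  by (rule extr_chain_steps_free_leaves[OF chain])

lemma fvs_N_eq_set: "fvs N = set Y"
proof -
  have "fvs N = (\<lambda>(i, j). Y ! (i - 1)) ` set (step_labels m p)"
    unfolding fvs_N free_leaves_M image_image using leaf_target_step by (auto intro!: image_cong)
  also have "\<dots> = set Y"
  proof
    show "(\<lambda>(i, j). Y ! (i - 1)) ` set (step_labels m p) \<subseteq> set Y"
      using Y_length unfolding set_step_labels by auto
    show "set Y \<subseteq> (\<lambda>(i, j). Y ! (i - 1)) ` set (step_labels m p)"
    proof
      fix y assume "y \<in> set Y"
      then obtain k where "k < m" "y = Y ! k" using Y_length by (auto simp: in_set_conv_nth)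
      then show "y \<in> (\<lambda>(i, j). Y ! (i - 1)) ` set (step_labels m p)"
        unfolding set_step_labels by (intro image_eqI[of _ _ "(Suc k, 0)"]) auto
    qed
  qed
  finally show ?thesis .
qed

lemma Free_N: "Free N = Y"
  using Y_sorted unfolding Free_def fvs_N_eq_set
  by (simp add: strict_sorted_iff sorted_list_of_set.idem_if_sorted_distinct)

lemma occurrences_N:
  assumes i: "i \<in> {1..m}"
  shows "{c. subt N c = Some (Var (Y ! (i - 1)))} = {b i j | j. j \<le> p i}"
proof -
  have in_Y: "i - 1 < length Y" using i Y_length by auto
  have same_var: "Y ! (i' - 1) = Y ! (i - 1) \<longleftrightarrow> i' = i" if "(i', j) \<in> set (step_labels m p)" for i' j
  proof -
    have "i' - 1 < length Y" "1 \<le> i'" using that Y_length unfolding set_step_labels by auto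
    moreover have "distinct Y" using Y_sorted strict_sorted_iff by blast
    ultimately show ?thesis using nth_eq_iff_index_eq[OF _ _ in_Y] i by auto
  qed
  have "Y ! (i - 1) \<in> fvs N" using in_Y fvs_N_eq_set by simp
  note free_occurrence = subt_N_eq_free_Var[OF this]
  have "subt N c = Some (Var (Y ! (i - 1))) \<longleftrightarrow> c \<in> {b i j | j. j \<le> p i}" for c
  proof -
    have "subt N c = Some (Var (Y ! (i - 1))) \<longleftrightarrow>
        (\<exists>i' j. (i', j) \<in> set (step_labels m p) \<and> c = b i' j \<and> Y ! (i' - 1) = Y ! (i - 1))"
      unfolding free_occurrence free_leaves_M by (auto simp: leaf_target_step) blast
    also have "\<dots> \<longleftrightarrow> c \<in> {b i j | j. j \<le> p i}"
      using same_var i unfolding set_step_labels by auto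
    finally show ?thesis .
  qed
  then show ?thesis by blast
qed

end

theorem lemma2p16:
  fixes \<Omega> :: "var \<Rightarrow> 'a form"
    and M :: trm and m :: nat and \<omega> :: "nat \<Rightarrow> 'a form"
    and p :: "nat \<Rightarrow> nat" and b :: "nat \<Rightarrow> nat \<Rightarrow> addr"
  assumes Omega_inf: "\<forall>\<phi>. infinite {x. \<Omega> x = \<phi>}"
    and M_NF: "M \<in> LambdaNF \<Omega>"
    and chain: "extr_chain (blueprint \<Omega> M) (steps m \<omega> p b) Map.empty"
  shows "\<forall>Y :: var list. sorted_wrt (<) Y \<and> length Y = m \<and> map \<Omega> Y = map \<omega> [1..<Suc m] \<longrightarrow>
           (\<exists>N. N \<in> LambdaNF \<Omega> \<and> tdom N = tdom M \<and> blueprint \<Omega> N = blueprint \<Omega> M \<and>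
                (\<exists>\<phi>. has_type \<Omega> M \<phi> \<and> has_type \<Omega> N \<phi>) \<and> Free N = Y \<and>
                (\<forall>i\<in>{1..m}. {c. subt N c = Some (Var (Y ! (i - 1)))} = {b i j | j. j \<le> p i}))"
proof (intro allI impI)
  fix Y :: "var list"
  assume Y: "sorted_wrt (<) Y \<and> length Y = m \<and> map \<Omega> Y = map \<omega> [1..<Suc m]"
  obtain \<rho> where \<rho>: "strict_mono \<rho>" "\<And>x. \<Omega> (\<rho> x) = \<Omega> x" "\<And>x. sum_list Y < \<rho> x"
    using type_preserving_renaming_above[OF Omega_inf] by blast
  have "relabelling \<Omega> M (leaf_target b Y (step_labels m p)) \<rho>"
    using relabelling_leaf_target[OF M_NF chain _ _ _ \<rho>] Y by (simp add: strict_sorted_iff)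
  then interpret step_relabelling \<Omega> M m \<omega> p b Y \<rho>
    using chain Y by (simp add: step_relabelling_def step_relabelling_axioms_def)
  show "\<exists>N. N \<in> LambdaNF \<Omega> \<and> tdom N = tdom M \<and> blueprint \<Omega> N = blueprint \<Omega> M \<and>
      (\<exists>\<phi>. has_type \<Omega> M \<phi> \<and> has_type \<Omega> N \<phi>) \<and> Free N = Y \<and>
      (\<forall>i\<in>{1..m}. {c. subt N c = Some (Var (Y ! (i - 1)))} = {b i j | j. j \<le> p i})"
    using N_LambdaNF tdom_N blueprint_N M_typed has_type_N Free_N occurrences_N by blast
qed

end
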